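(* Let $\epsilon$ and $\epsilon'$ be two sign assignments on a poset $(S,\triangleleft)$. If $\mathrm H^1_{\rm CW}(\mathscr K(S,\triangleleft);\mathbb Z_2)=0$, then there is an isomorphism of sign assignments from $\epsilon$ to $\epsilon'$, i.e. a map $\eta\colon S\to\mathbb Z_2$ such that $\eta(x)+\epsilon'_{x,y}\equiv\epsilon_{x,y}+\eta(y)\pmod 2$ for all covering pairs $x\,\tilde\triangleleft\,y$.
   Context: In a poset, $x\,\tilde\triangleleft\,y$ ($y$ covers $x$) means $x\triangleleft y$ with no element strictly between. A square consists of $x,y,y',z$ with $y\neq y'$, $x\,\tilde\triangleleft\,y\,\tilde\triangleleft\,z$ and $x\,\tilde\triangleleft\,y'\,\tilde\triangleleft\,z$. A sign assignment assigns $\epsilon_{x,y}\in\mathbb Z_2$ to each covering pair such that $\epsilon_{x,y}+\epsilon_{y,z}\equiv\epsilon_{x,y'}+\epsilon_{y',z}+1\pmod 2$ for every square. $\mathscr K(S,\triangleleft)$ is the CW-complex obtained from the geometric realization of the Hasse graph of $S$ (vertices the elements of $S$, an edge for each covering pair) by attaching a $2$-cell along each square; $\mathrm H^*_{\rm CW}(-;\mathbb Z_2)$ is its cellular cohomology with $\mathbb Z_2$ coefficients. *)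

theory Defs
  imports Main "HOL-Library.Z2"
begin

definition covers :: "'a::order \<Rightarrow> 'a \<Rightarrow> bool" where
  "covers x y \<longleftrightarrow> x < y \<and> \<not> (\<exists>w. x < w \<and> w < y)"

definition is_square :: "'a::order \<Rightarrow> 'a \<Rightarrow> 'a \<Rightarrow> 'a \<Rightarrow> bool" where
  "is_square x y y' z \<longleftrightarrow> y \<noteq> y' \<and> covers x y \<and> covers y z \<and> covers x y' \<and> covers y' z"

definition sign_assignment :: "('a::order \<Rightarrow> 'a \<Rightarrow> bit) \<Rightarrow> bool" where
  "sign_assignment \<epsilon> \<longleftrightarrow>
     (\<forall>x y y' z. is_square x y y' z \<longrightarrow> \<epsilon> x y + \<epsilon> y z = \<epsilon> x y' + \<epsilon> y' z + 1)"

text \<open>Cellular cochain complex of K(S) with Z_2 coefficients, in degrees 0,1,2.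
0-cells = elements, 1-cells = covering pairs, 2-cells = squares.
A 0-cochain is any function on elements; a 1-cochain is a function on covering pairs
(represented as a function 'a => 'a => bit vanishing off covering pairs);
a 2-cochain is a function on squares (vanishing off squares).
Over Z_2 orientations are irrelevant.\<close>

definition cochains1 :: "('a::order \<Rightarrow> 'a \<Rightarrow> bit) set" where
  "cochains1 = {c. \<forall>x y. \<not> covers x y \<longrightarrow> c x y = 0}"

definition cobdry0 :: "('a::order \<Rightarrow> bit) \<Rightarrow> ('a \<Rightarrow> 'a \<Rightarrow> bit)" where
  "cobdry0 f = (\<lambda>x y. if covers x y then f x + f y else 0)"

definition cobdry1 :: "('a::order \<Rightarrow> 'a \<Rightarrow> bit) \<Rightarrow> ('a \<Rightarrow> 'a \<Rightarrow> 'a \<Rightarrow> 'a \<Rightarrow> bit)" where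
  "cobdry1 c = (\<lambda>x y y' z. if is_square x y y' z then c x y + c y z + c x y' + c y' z else 0)"

definition cocycles1 :: "('a::order \<Rightarrow> 'a \<Rightarrow> bit) set" where
  "cocycles1 = {c \<in> cochains1. cobdry1 c = (\<lambda>_ _ _ _. 0)}"

definition coboundaries1 :: "('a::order \<Rightarrow> 'a \<Rightarrow> bit) set" where
  "coboundaries1 = range cobdry0"

definition cellular_H1 :: "('a::order \<Rightarrow> 'a \<Rightarrow> bit) set set" where
  "cellular_H1 = cocycles1 // {(c, d). c \<in> cocycles1 \<and> d \<in> cocycles1 \<and> c - d \<in> coboundaries1}"

definition cellular_H1_zero :: "'a::order itself \<Rightarrow> bool" where
  "cellular_H1_zero _ \<longleftrightarrow> (cellular_H1 :: ('a \<Rightarrow> 'a \<Rightarrow> bit) set set) = {coboundaries1}"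

end

theory Submission
  imports Defs
begin

(* Over Z_2 the sum of a sign assignment around any square is 1, so the sum of two
   sign assignments vanishes around every square: their difference is a 1-cocycle
   of K(S).  When H^1 = 0 this cocycle is the coboundary of some eta : S -> Z_2,
   i.e. eps x y + eps' x y = eta x + eta y on covering pairs, which is exactly the
   required isomorphism. *)

lemma bit_add_self: "(a::bit) + a = 0"
  using diff_self[of a] by (simp only: minus_bit_def)

lemma sign_assignment_square_sum:
  assumes "sign_assignment \<epsilon>" and "is_square x y y' z"
  shows "\<epsilon> x y + \<epsilon> y z + \<epsilon> x y' + \<epsilon> y' z = 1"
proof -
  have "\<epsilon> x y + \<epsilon> y z = \<epsilon> x y' + \<epsilon> y' z + 1"
    using assms unfolding sign_assignment_def by blast
  then have "\<epsilon> x y + \<epsilon> y z - (\<epsilon> x y' + \<epsilon> y' z) = 1"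
    by (simp only: diff_eq_eq add.commute)
  then show ?thesis
    by (simp only: minus_bit_def add.assoc)
qed

definition sign_difference :: "('a::order \<Rightarrow> 'a \<Rightarrow> bit) \<Rightarrow> ('a \<Rightarrow> 'a \<Rightarrow> bit) \<Rightarrow> 'a \<Rightarrow> 'a \<Rightarrow> bit" where
  "sign_difference \<epsilon> \<epsilon>' = (\<lambda>x y. if covers x y then \<epsilon> x y + \<epsilon>' x y else 0)"

lemma sign_difference_in_cocycles1:
  assumes "sign_assignment \<epsilon>" and "sign_assignment \<epsilon>'"
  shows "sign_difference \<epsilon> \<epsilon>' \<in> cocycles1"
proof -
  have "cobdry1 (sign_difference \<epsilon> \<epsilon>') x y y' z = 0" for x y y' z
  proof (cases "is_square x y y' z")
    case True
    then have edges: "covers x y" "covers y z" "covers x y'" "covers y' z"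
      unfolding is_square_def by auto
    have "cobdry1 (sign_difference \<epsilon> \<epsilon>') x y y' z
        = (\<epsilon> x y + \<epsilon> y z + \<epsilon> x y' + \<epsilon> y' z) + (\<epsilon>' x y + \<epsilon>' y z + \<epsilon>' x y' + \<epsilon>' y' z)"
      by (simp only: cobdry1_def sign_difference_def True edges if_True ac_simps)
    also have "\<dots> = 0"
      using True assms by (simp only: sign_assignment_square_sum bit_add_self)
    finally show ?thesis .
  qed (simp add: cobdry1_def)
  then have "cobdry1 (sign_difference \<epsilon> \<epsilon>') = (\<lambda>_ _ _ _. 0)"
    by blast
  then show ?thesis
    by (simp add: cocycles1_def cochains1_def sign_difference_def)
qed

lemma cocycle_in_coboundaries1_if_H1_zero:
  fixes c :: "'a::order \<Rightarrow> 'a \<Rightarrow> bit"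
  assumes "cellular_H1_zero TYPE('a)" and "c \<in> cocycles1"
  shows "c \<in> coboundaries1"
proof -
  define R :: "(('a \<Rightarrow> 'a \<Rightarrow> bit) \<times> ('a \<Rightarrow> 'a \<Rightarrow> bit)) set"
    where "R = {(c, d). c \<in> cocycles1 \<and> d \<in> cocycles1 \<and> c - d \<in> coboundaries1}"
  have "R `` {c} \<in> cellular_H1"
    unfolding cellular_H1_def R_def[symmetric] using assms(2) by (rule quotientI)
  then have class_eq: "R `` {c} = coboundaries1"
    using assms(1) unfolding cellular_H1_zero_def by auto
  have "c - c = cobdry0 (\<lambda>_. 0)"
    by (simp add: cobdry0_def fun_eq_iff)
  then have "(c, c) \<in> R"
    unfolding R_def coboundaries1_def using assms(2) by auto
  with class_eq show ?thesis by auto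
qed

theorem proposition3p14:
  fixes \<epsilon> \<epsilon>' :: "'a::order \<Rightarrow> 'a \<Rightarrow> bit"
  assumes "sign_assignment \<epsilon>" and "sign_assignment \<epsilon>'"
    and "cellular_H1_zero TYPE('a)"
  shows "\<exists>\<eta> :: 'a \<Rightarrow> bit. \<forall>x y. covers x y \<longrightarrow> \<eta> x + \<epsilon>' x y = \<epsilon> x y + \<eta> y"
proof -
  have "sign_difference \<epsilon> \<epsilon>' \<in> coboundaries1"
    using assms by (simp add: cocycle_in_coboundaries1_if_H1_zero sign_difference_in_cocycles1)
  then obtain \<eta> where \<eta>: "sign_difference \<epsilon> \<epsilon>' = cobdry0 \<eta>"
    unfolding coboundaries1_def by auto
  have "\<eta> x + \<epsilon>' x y = \<epsilon> x y + \<eta> y" if "covers x y" for x y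
  proof -
    have "\<epsilon> x y + \<epsilon>' x y = \<eta> x + \<eta> y"
      using fun_cong[OF fun_cong[OF \<eta>, of x], of y] that
      by (simp add: sign_difference_def cobdry0_def)
    then show ?thesis
      by (metis add.assoc add.commute bit_add_self add_0)
  qed
  then show ?thesis by blast
qed

end
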